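(* Let $G$ be a finite transitive permutation group with point stabiliser $H$, let $p$ be a prime, let $S$ be a Sylow $p$-subgroup of $H$, and let $x\in H$ have order a power of $p$. (i) If $|S^G|>|S^H|^2-|S^H|+1$, then $G$ has a subdegree divisible by $p$. (ii) If $|x^G|>|x^G\cap H|^2-|x^G\cap H|+1$, then $G$ has a subdegree divisible by $p$.
   Context: $S^G$ denotes the set of $G$-conjugates of $S$ (similarly $S^H$, $x^G$). A subdegree is the size of an orbit of a point stabiliser. *)

theory Defs
  imports "HOL-Algebra.Algebra" "HOL-Computational_Algebra.Computational_Algebra"
begin

definition subgroup_conjugates :: "('a, 'b) monoid_scheme \<Rightarrow> 'a set \<Rightarrow> 'a set set" where
  "subgroup_conjugates G S = {g <#\<^bsub>G\<^esub> S #>\<^bsub>G\<^esub> inv\<^bsub>G\<^esub> g | g. g \<in> carrier G}"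

definition elem_conjugates :: "('a, 'b) monoid_scheme \<Rightarrow> 'a \<Rightarrow> 'a set" where
  "elem_conjugates G x = {g \<otimes>\<^bsub>G\<^esub> x \<otimes>\<^bsub>G\<^esub> inv\<^bsub>G\<^esub> g | g. g \<in> carrier G}"

definition is_sylow_subgroup :: "('a, 'b) monoid_scheme \<Rightarrow> nat \<Rightarrow> 'a set \<Rightarrow> 'a set \<Rightarrow> bool" where
  "is_sylow_subgroup G p H S \<longleftrightarrow> subgroup S G \<and> S \<subseteq> H \<and> card S = p ^ multiplicity p (card H)"

end

theory Submission
  imports Defs
begin

text \<open>
  Suppose no subdegree is divisible by \<open>p\<close>. Then every \<open>H\<^sub>\<gamma>\<close> has index prime to \<open>p\<close> in
  \<open>H = G\<^sub>\<alpha>\<close>, so it contains an \<open>H\<close>-conjugate of the Sylow subgroup \<open>S\<close> (and, by Sylow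
  conjugacy in \<open>H\<close>, a conjugate of \<open>x\<close>). Hence the sets
  \<open>B\<^sub>\<beta> = {T \<in> S\<^sup>G. T \<le> G\<^sub>\<beta>}\<close> (resp. \<open>x\<^sup>G \<inter> G\<^sub>\<beta>\<close>), \<open>\<beta> \<in> \<Omega>\<close>, pairwise intersect. By
  transitivity they all have the size \<open>a = |S\<^sup>H|\<close> (resp. \<open>|x\<^sup>G \<inter> H|\<close>) and every point of
  \<open>S\<^sup>G\<close> (resp. \<open>x\<^sup>G\<close>) lies in the same number of them. A counting argument shows that such
  a configuration has at most \<open>a\<^sup>2 - a + 1\<close> points, as in a projective plane of order
  \<open>a - 1\<close>.
\<close>

section \<open>Intersecting families of blocks\<close>

lemma sum_card_filter_swap:
  assumes "finite A" "finite B"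
  shows "(\<Sum>x\<in>A. card {y \<in> B. R x y}) = (\<Sum>y\<in>B. card {x \<in> A. R x y})"
  using sum.swap_restrict[OF assms, of "\<lambda>_ _. 1::nat" R] by simp

locale intersecting_family =
  fixes V :: "'v set" and I :: "'i set" and B :: "'i \<Rightarrow> 'v set" and a d :: nat
  assumes finite_V: "finite V" and finite_I: "finite I"
    and block_subset: "i \<in> I \<Longrightarrow> B i \<subseteq> V"
    and card_block: "i \<in> I \<Longrightarrow> card (B i) = a"
    and degree: "v \<in> V \<Longrightarrow> card {i \<in> I. v \<in> B i} = d"
    and degree_pos: "0 < d"
    and blocks_intersect: "i \<in> I \<Longrightarrow> j \<in> I \<Longrightarrow> B i \<inter> B j \<noteq> {}"
begin

definition pair_degree :: "'v \<Rightarrow> 'v \<Rightarrow> nat" where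
  "pair_degree v u = card {i \<in> I. v \<in> B i \<and> u \<in> B i}"

lemma incidence_count: "card I * a = card V * d"
proof -
  have "card I * a = (\<Sum>i\<in>I. card {u \<in> V. u \<in> B i})"
    using block_subset card_block by (simp add: Int_absorb1 Collect_conj_eq Int_commute)
  also have "\<dots> = (\<Sum>u\<in>V. card {i \<in> I. u \<in> B i})"
    by (rule sum_card_filter_swap[OF finite_I finite_V])
  also have "\<dots> = card V * d"
    using degree by simp
  finally show ?thesis .
qed

lemma sum_pair_degree:
  assumes "v \<in> V"
  shows "(\<Sum>u\<in>V. pair_degree v u) = d * a"
proof -
  let ?I\<^sub>v = "{i \<in> I. v \<in> B i}"
  have "(\<Sum>u\<in>V. pair_degree v u) = (\<Sum>u\<in>V. card {i \<in> ?I\<^sub>v. u \<in> B i})"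
    unfolding pair_degree_def by (intro sum.cong) (auto intro: arg_cong[where f=card])
  also have "\<dots> = (\<Sum>i\<in>?I\<^sub>v. card {u \<in> V. u \<in> B i})"
    using finite_I by (intro sum_card_filter_swap[OF finite_V]) auto
  also have "\<dots> = (\<Sum>i\<in>?I\<^sub>v. a)"
    using block_subset card_block by (intro sum.cong) (auto simp: Collect_conj_eq Int_absorb1 Int_commute)
  finally show ?thesis
    using degree[OF assms] by simp
qed

lemma pair_degree_self: "v \<in> V \<Longrightarrow> pair_degree v v = d"
  using degree by (simp add: pair_degree_def)

text \<open>Counts the triples \<open>(i, j, u)\<close> with \<open>v \<in> B i\<close>, \<open>v \<notin> B j\<close> and \<open>u \<in> B i \<inter> B j\<close>,
  each pair \<open>(i, j)\<close> contributing at least one \<open>u\<close>.\<close>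
lemma sum_pair_degree_excess:
  assumes "v \<in> V"
  shows "d * (card I - d) \<le> (\<Sum>u\<in>V. pair_degree v u * (d - pair_degree v u))"
proof -
  let ?I\<^sub>v = "{i \<in> I. v \<in> B i}" and ?J\<^sub>v = "{j \<in> I. v \<notin> B j}"
  have fin: "finite ?I\<^sub>v" "finite ?J\<^sub>v" using finite_I by auto
  have card_J: "card ?J\<^sub>v = card I - d"
  proof -
    have "?J\<^sub>v = I - ?I\<^sub>v" by blast
    then show ?thesis using card_Diff_subset[OF fin(1)] degree[OF assms] by auto
  qed
  let ?P = "\<lambda>u. {p \<in> ?I\<^sub>v \<times> ?J\<^sub>v. u \<in> B (fst p) \<and> u \<in> B (snd p)}"
  have excess: "d - pair_degree v u = card {j \<in> ?J\<^sub>v. u \<in> B j}" if "u \<in> V" for u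
  proof -
    have "{i \<in> I. u \<in> B i} = {i \<in> I. v \<in> B i \<and> u \<in> B i} \<union> {j \<in> ?J\<^sub>v. u \<in> B j}" by blast
    then show ?thesis
      using degree[OF that] finite_I by (simp add: pair_degree_def card_Un_disjoint disjoint_iff)
  qed
  have "d * (card I - d) = (\<Sum>p\<in>?I\<^sub>v \<times> ?J\<^sub>v. 1)"
    using degree[OF assms] card_J by (simp add: card_cartesian_product)
  also have "\<dots> \<le> (\<Sum>p\<in>?I\<^sub>v \<times> ?J\<^sub>v. card {u \<in> V. u \<in> B (fst p) \<and> u \<in> B (snd p)})"
  proof (intro sum_mono)
    fix p assume "p \<in> ?I\<^sub>v \<times> ?J\<^sub>v"
    then obtain u where "u \<in> B (fst p)" "u \<in> B (snd p)"
      using blocks_intersect by (cases p) fastforce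
    moreover have "finite {u \<in> V. u \<in> B (fst p) \<and> u \<in> B (snd p)}" using finite_V by simp
    ultimately show "1 \<le> card {u \<in> V. u \<in> B (fst p) \<and> u \<in> B (snd p)}"
      using block_subset \<open>p \<in> ?I\<^sub>v \<times> ?J\<^sub>v\<close> by (cases p) (force simp: Suc_le_eq card_gt_0_iff)
  qed
  also have "\<dots> = (\<Sum>u\<in>V. card (?P u))"
    using fin finite_V by (intro sum_card_filter_swap[symmetric]) auto
  also have "\<dots> = (\<Sum>u\<in>V. pair_degree v u * (d - pair_degree v u))"
  proof (intro sum.cong refl)
    fix u assume "u \<in> V"
    have "?P u = {i \<in> I. v \<in> B i \<and> u \<in> B i} \<times> {j \<in> ?J\<^sub>v. u \<in> B j}" by auto
    then show "card (?P u) = pair_degree v u * (d - pair_degree v u)"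
      using excess[OF \<open>u \<in> V\<close>] by (simp only: card_cartesian_product pair_degree_def)
  qed
  finally show ?thesis .
qed

lemma pair_degree_le:
  assumes "u \<in> V"
  shows "pair_degree v u \<le> d"
proof -
  have "pair_degree v u \<le> card {i \<in> I. u \<in> B i}"
    unfolding pair_degree_def using finite_I by (intro card_mono) auto
  then show ?thesis using degree[OF assms] by simp
qed

lemma card_points_le_one_of_small_blocks:
  assumes "a \<le> 1"
  shows "card V \<le> 1"
proof -
  have block_eq: "B i = {v}" if "i \<in> I" "v \<in> B i" for i v
  proof -
    have "finite (B i)" using finite_subset[OF block_subset[OF that(1)] finite_V] .
    then have "card (B i) > 0"
      using that(2) card_gt_0_iff by blast
    then have "card (B i) = 1"
      using card_block[OF that(1)] assms by simp
    then obtain w where "B i = {w}" by (rule card_1_singletonE)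
    then show ?thesis using that(2) by simp
  qed
  have covered: "\<exists>i\<in>I. v \<in> B i" if "v \<in> V" for v
  proof -
    have "{i \<in> I. v \<in> B i} \<noteq> {}" using degree[OF that] degree_pos by (metis card.empty less_irrefl)
    then show ?thesis by blast
  qed
  have "v = w" if "v \<in> V" "w \<in> V" for v w
  proof -
    obtain i j where "i \<in> I" "v \<in> B i" "j \<in> I" "w \<in> B j"
      using covered \<open>v \<in> V\<close> \<open>w \<in> V\<close> by blast
    then show ?thesis
      using block_eq[of i v] block_eq[of j w] blocks_intersect[of i j] by auto
  qed
  then show ?thesis
    using finite_V by (simp add: card_le_Suc0_iff_eq)
qed

lemma sum_pair_degree_sq_le:
  assumes "v \<in> V"
  shows "(\<Sum>u\<in>V. (int (pair_degree v u))\<^sup>2) \<le> int d * int d * int a - int d * int (card I) + int d * int d"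
proof -
  let ?t = "\<lambda>u. int (pair_degree v u)" and ?D = "int d"
  have "d \<le> card I"
    using degree[OF assms] finite_I card_mono[of I "{i \<in> I. v \<in> B i}"] by auto
  then have "?D * (int (card I) - ?D) = int (d * (card I - d))"
    by (simp add: of_nat_diff)
  also have "\<dots> \<le> int (\<Sum>u\<in>V. pair_degree v u * (d - pair_degree v u))"
    using sum_pair_degree_excess[OF assms] by (simp only: of_nat_le_iff)
  also have "\<dots> = (\<Sum>u\<in>V. ?D * ?t u - (?t u)\<^sup>2)"
    unfolding of_nat_sum
    by (intro sum.cong refl) (simp add: of_nat_diff pair_degree_le power2_eq_square algebra_simps)
  also have "\<dots> = ?D * (?D * int a) - (\<Sum>u\<in>V. (?t u)\<^sup>2)"
    using sum_pair_degree[OF assms]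
    by (simp add: sum_subtractf flip: sum_distrib_left of_nat_sum of_nat_mult)
  finally show ?thesis
    by (simp add: algebra_simps)
qed

lemma sum_pair_degree_sq_ge:
  assumes "v \<in> V"
  shows "(int a * int d - int d)\<^sup>2
    \<le> int a * int a * (\<Sum>u\<in>V. (int (pair_degree v u))\<^sup>2) - 2 * int a * int d * (int d * int a)
      + int (card V) * int d * int d"
proof -
  let ?t = "\<lambda>u. int (pair_degree v u)" and ?A = "int a" and ?D = "int d"
  have "(?A * ?D - ?D)\<^sup>2 \<le> (\<Sum>u\<in>V. (?A * ?t u - ?D)\<^sup>2)"
    using member_le_sum[OF assms, of "\<lambda>u. (?A * ?t u - ?D)\<^sup>2"] finite_V pair_degree_self[OF assms]
    by simp
  also have "\<dots> = (\<Sum>u\<in>V. ?A * ?A * (?t u)\<^sup>2 - 2 * ?A * ?D * ?t u + ?D * ?D)"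
    by (intro sum.cong refl) (simp add: power2_eq_square algebra_simps)
  also have "\<dots> = ?A * ?A * (\<Sum>u\<in>V. (?t u)\<^sup>2) - 2 * ?A * ?D * (\<Sum>u\<in>V. ?t u) + int (card V) * ?D * ?D"
    by (simp add: sum.distrib sum_subtractf sum_distrib_left)
  also have "(\<Sum>u\<in>V. ?t u) = ?D * ?A"
    using sum_pair_degree[OF assms] by (simp flip: of_nat_sum of_nat_mult)
  finally show ?thesis .
qed

text \<open>The two bounds on the second moment of \<open>pair_degree v\<close> combine, via the identity below,
  to \<open>d\<^sup>2 (a - 1) (a\<^sup>2 - a + 1 - |V|) \<ge> 0\<close>.\<close>
theorem card_points_le: "card V \<le> a ^ 2 - a + 1"
proof (cases "a \<le> 1")
  case True
  then show ?thesis using card_points_le_one_of_small_blocks by (simp add: le_trans)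
next
  case False
  show ?thesis
  proof (cases "V = {}")
    case False
    then obtain v where v: "v \<in> V" by blast
    define s where "s = (\<Sum>u\<in>V. (int (pair_degree v u))\<^sup>2)"
    define A D b m where "A = int a" and "D = int d" and "b = int (card V)" and "m = int (card I)"
    have "m * A = b * D"
      using incidence_count unfolding m_def A_def b_def D_def by (metis of_nat_mult)
    moreover have "s \<le> D * D * A - D * m + D * D"
      using sum_pair_degree_sq_le[OF v] unfolding s_def A_def D_def m_def .
    moreover have "(A * D - D)\<^sup>2 \<le> A * A * s - 2 * A * D * (D * A) + b * D * D"
      using sum_pair_degree_sq_ge[OF v] unfolding s_def A_def D_def b_def .
    moreover have "D * D * ((A - 1) * (A * A - A + 1 - b)) =
        A * A * (D * D * A - D * m + D * D - s)
      + (A * A * s - 2 * A * D * (D * A) + b * D * D - (A * D - D)\<^sup>2) + A * D * (m * A - b * D)"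
      by (simp add: algebra_simps power2_eq_square)
    ultimately have "0 \<le> D * D * ((A - 1) * (A * A - A + 1 - b))"
      by simp
    moreover have "0 < D * D"
      using degree_pos by (simp add: D_def)
    ultimately have "0 \<le> (A - 1) * (A * A - A + 1 - b)"
      using mult_le_cancel_left_pos[of "D * D" 0] by simp
    moreover have "0 < A - 1"
      using \<open>\<not> a \<le> 1\<close> by (simp add: A_def)
    ultimately have "b \<le> A * A - A + 1"
      using mult_le_cancel_left_pos[of "A - 1" 0] by simp
    moreover have "int (a ^ 2 - a + 1) = A * A - A + 1"
      using le_square[of a] by (simp add: A_def power2_eq_square of_nat_diff)
    ultimately have "int (card V) \<le> int (a ^ 2 - a + 1)"
      unfolding b_def by (simp only:)
    then show ?thesis
      by (simp only: of_nat_le_iff)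
  qed simp
qed

end

section \<open>Sylow conjugacy\<close>

lemma group_action_restrictI:
  fixes Q (structure)
  assumes "group Q"
    and closed: "\<And>q y. q \<in> carrier Q \<Longrightarrow> y \<in> Y \<Longrightarrow> f q y \<in> Y"
    and one: "\<And>y. y \<in> Y \<Longrightarrow> f \<one> y = y"
    and mult: "\<And>q r y. q \<in> carrier Q \<Longrightarrow> r \<in> carrier Q \<Longrightarrow> y \<in> Y \<Longrightarrow> f (q \<otimes> r) y = f q (f r y)"
  shows "group_action Q Y (\<lambda>q. \<lambda>y\<in>Y. f q y)"
proof -
  interpret Q: group Q by fact
  have bij: "(\<lambda>y\<in>Y. f q y) \<in> Bij Y" if q: "q \<in> carrier Q" for q
  proof -
    have inv_q: "inv q \<in> carrier Q" using q by simp
    have left_inv: "f (inv q) (f q y) = y" if "y \<in> Y" for y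
      using mult[of "inv q" q y] one[OF that] q that by simp
    have right_inv: "f q (f (inv q) y) = y" if "y \<in> Y" for y
      using mult[of q "inv q" y] one[OF that] q that by simp
    have "bij_betw (f q) Y Y"
      by (rule bij_betw_byWitness[where f' = "f (inv q)"])
         (use left_inv right_inv closed[OF q] closed[OF inv_q] in blast)+
    then show ?thesis
      unfolding Bij_def by simp
  qed
  have "(\<lambda>q. \<lambda>y\<in>Y. f q y) \<in> hom Q (BijGroup Y)"
  proof (rule homI)
    fix q r assume q: "q \<in> carrier Q" and r: "r \<in> carrier Q"
    have "(\<lambda>y\<in>Y. f q y) \<otimes>\<^bsub>BijGroup Y\<^esub> (\<lambda>y\<in>Y. f r y) = compose Y (\<lambda>y\<in>Y. f q y) (\<lambda>y\<in>Y. f r y)"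
      using bij[OF q] bij[OF r] by (simp add: BijGroup_def)
    also have "\<dots> = (\<lambda>y\<in>Y. f (q \<otimes> r) y)"
      unfolding compose_def using closed[OF r] mult[OF q r] by (intro restrict_ext) simp
    finally show "(\<lambda>y\<in>Y. f (q \<otimes> r) y) = (\<lambda>y\<in>Y. f q y) \<otimes>\<^bsub>BijGroup Y\<^esub> (\<lambda>y\<in>Y. f r y)" ..
  qed (use bij in \<open>simp add: BijGroup_def\<close>)
  then show ?thesis
    unfolding group_action_def group_hom_def group_hom_axioms_def
    using \<open>group Q\<close> group_BijGroup by blast
qed

context group
begin

lemma conjugate_eq_image: "g <# A #> inv g = (\<lambda>y. g \<otimes> y \<otimes> inv g) ` A"
  unfolding l_coset_def r_coset_def by auto

lemma card_conjugate:
  assumes "g \<in> carrier G" "A \<subseteq> carrier G"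
  shows "card (g <# A #> inv g) = card A"
  unfolding conjugate_eq_image
  using assms by (intro card_image inj_onI) (auto dest: conjugation_is_inj)

lemma rcosets_action:
  assumes "subgroup P G"
  shows "group_action G (rcosets P) (\<lambda>g. \<lambda>C\<in>rcosets P. C #> inv g)"
proof (rule group_action_restrictI[OF is_group])
  have P: "P \<subseteq> carrier G" using subgroup.subset[OF assms] .
  have C: "C \<subseteq> carrier G" if "C \<in> rcosets P" for C
    using subgroup.rcosets_carrier[OF assms is_group that] .
  fix q C assume "q \<in> carrier G" "C \<in> rcosets P"
  then obtain g where "g \<in> carrier G" "C = P #> g" unfolding RCOSETS_def by blast
  then show "C #> inv q \<in> rcosets P"
    using \<open>q \<in> carrier G\<close> P by (simp add: coset_mult_assoc rcosetsI)
next
  fix C assume "C \<in> rcosets P"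
  then show "C #> inv \<one> = C"
    using subgroup.rcosets_carrier[OF assms is_group] by simp
next
  fix q r C assume "q \<in> carrier G" "r \<in> carrier G" "C \<in> rcosets P"
  then show "C #> inv (q \<otimes> r) = C #> inv r #> inv q"
    using subgroup.rcosets_carrier[OF assms is_group] by (simp add: inv_mult_group coset_mult_assoc)
qed

end

lemma (in group_action) p_group_fixed_point:
  assumes "finite (carrier G)" "finite E" "Factorial_Ring.prime p" "Coset.order G = p ^ k" "\<not> p dvd card E"
  shows "\<exists>y\<in>E. \<forall>g\<in>carrier G. \<phi> g y = y"
proof (rule ccontr)
  assume no_fixed: "\<not> ?thesis"
  have "p dvd card (orbit G \<phi> y)" if y: "y \<in> E" for y
  proof -
    have "card (orbit G \<phi> y) dvd p ^ k"
      using orbit_stabilizer_theorem[OF y] assms(4) by (metis dvd_triv_left)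
    then obtain i where i: "card (orbit G \<phi> y) = p ^ i"
      using assms(3) by (auto simp: divides_primepow_nat)
    have "i \<noteq> 0"
    proof
      assume "i = 0"
      then have "orbit G \<phi> y = {y}"
        using i orbit_refl[OF y] by (metis card_1_singletonE power_0 singletonD)
      then show False
        using no_fixed y unfolding orbit_def by blast
    qed
    then show ?thesis using i by (simp add: dvd_power)
  qed
  then have "p dvd (\<Sum>orb\<in>orbits G E \<phi>. card orb)"
    by (intro dvd_sum) (auto simp: orbits_def)
  also have "(\<Sum>orb\<in>orbits G E \<phi>. card orb) = card E"
    using disjoint_sum[OF assms(2), of "\<lambda>_. 1::nat"] by simp
  finally show False using assms(5) by simp
qed

context group
begin

lemma sylow_index_not_dvd:
  assumes "finite (carrier G)" "Factorial_Ring.prime p" "subgroup P G" "card P = p ^ multiplicity p (Coset.order G)"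
  shows "\<not> p dvd card (rcosets P)"
proof
  assume "p dvd card (rcosets P)"
  then have "p ^ Suc (multiplicity p (Coset.order G)) dvd Coset.order G"
    using lagrange[OF assms(3)] assms(4) by (metis mult_dvd_mono power_Suc dvd_refl)
  moreover have "Coset.order G \<noteq> 0"
    using assms(1) by (simp add: order_gt_0_iff_finite)
  ultimately have "Suc (multiplicity p (Coset.order G)) \<le> multiplicity p (Coset.order G)"
    using assms(2) by (intro multiplicity_geI) (auto simp: not_prime_unit)
  then show False by simp
qed

lemma p_subgroup_le_conjugate_sylow:
  assumes fin: "finite (carrier G)" and "Factorial_Ring.prime p"
    and P: "subgroup P G" "card P = p ^ multiplicity p (Coset.order G)"
    and Q: "subgroup Q G" "card Q = p ^ k"
  shows "\<exists>g\<in>carrier G. Q \<subseteq> g <# P #> inv g"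
proof -
  \<comment> \<open>\<open>Q\<close> permutes the cosets of \<open>P\<close>, whose number is prime to \<open>p\<close>, so it fixes a coset \<open>P g\<close>.\<close>
  interpret Q_act: group_action "G\<lparr>carrier := Q\<rparr>" "rcosets P" "\<lambda>g. \<lambda>C\<in>rcosets P. C #> inv g"
    using group_action.induced_action[OF rcosets_action[OF P(1)] Q(1)] .
  have "rcosets P \<subseteq> Pow (carrier G)"
    using subgroup.rcosets_carrier[OF P(1) is_group] by blast
  then have "finite (rcosets P)"
    using fin finite_subset by blast
  moreover have "finite Q"
    using fin subgroup.subset[OF Q(1)] finite_subset by blast
  ultimately obtain C where C: "C \<in> rcosets P" and fixed: "\<And>q. q \<in> Q \<Longrightarrow> C #> inv q = C"
    using Q_act.p_group_fixed_point[OF _ _ assms(2), of k] sylow_index_not_dvd[OF fin assms(2) P] Q(2)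
    by (auto simp: Coset.order_def)
  then obtain g where g: "g \<in> carrier G" "C = P #> g"
    unfolding RCOSETS_def by blast
  have "Q \<subseteq> inv g <# P #> inv (inv g)"
  proof
    fix q assume "q \<in> Q"
    then have q: "q \<in> carrier G" "inv q \<in> Q"
      using subgroup.subset[OF Q(1)] subgroup.m_inv_closed[OF Q(1)] by auto
    have "P #> (g \<otimes> q) = P #> g"
      using fixed[OF q(2)] g q subgroup.subset[OF P(1)] by (simp add: coset_mult_assoc)
    then have "g \<otimes> q \<in> P #> g"
      using rcos_self[of "g \<otimes> q" P] g q P(1) by simp
    then obtain y where y: "y \<in> P" "g \<otimes> q = y \<otimes> g"
      unfolding r_coset_def by blast
    have "q = inv g \<otimes> (g \<otimes> q)"
      using g q by (simp add: m_assoc[symmetric])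
    also have "\<dots> = inv g \<otimes> y \<otimes> inv (inv g)"
      using y g subgroup.subset[OF P(1)] by (auto simp: m_assoc)
    finally have "q = inv g \<otimes> y \<otimes> inv (inv g)" .
    then show "q \<in> inv g <# P #> inv (inv g)"
      using y(1) unfolding conjugate_eq_image by blast
  qed
  then show ?thesis
    using g by blast
qed

lemma sylow_conjugate_le_subgroup:
  assumes fin: "finite (carrier G)" and "Factorial_Ring.prime p"
    and P: "subgroup P G" "card P = p ^ multiplicity p (Coset.order G)"
    and L: "subgroup L G" "p ^ multiplicity p (Coset.order G) dvd card L"
  shows "\<exists>g\<in>carrier G. g <# P #> inv g \<subseteq> L"
proof -
  let ?v = "multiplicity p (Coset.order G)"
  have "finite L"
    using fin subgroup.subset[OF L(1)] finite_subset by blast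
  moreover obtain m where "card L = p ^ ?v * m"
    using L(2) by blast
  ultimately obtain Q where Q: "subgroup Q (G\<lparr>carrier := L\<rparr>)" "card Q = p ^ ?v"
    using sylow_thm[OF assms(2) subgroup.subgroup_is_group[OF L(1) is_group]]
    by (auto simp: Coset.order_def)
  have QG: "subgroup Q G" "Q \<subseteq> L"
    using incl_subgroup[OF L(1) Q(1)] subgroup.subset[OF Q(1)] by auto
  obtain g where g: "g \<in> carrier G" "Q \<subseteq> g <# P #> inv g"
    using p_subgroup_le_conjugate_sylow[OF fin assms(2) P QG(1) Q(2)] by blast
  have "finite P"
    using fin subgroup.subset[OF P(1)] finite_subset by blast
  then have "finite (g <# P #> inv g)"
    unfolding conjugate_eq_image by simp
  moreover have "card Q = card (g <# P #> inv g)"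
    using card_conjugate[OF g(1) subgroup.subset[OF P(1)]] P(2) Q(2) by simp
  ultimately have "Q = g <# P #> inv g"
    by (rule card_subset_eq[OF _ g(2)])
  then show ?thesis
    using g(1) QG(2) by blast
qed

end

section \<open>Equivariant incidences on orbits\<close>

context group_action
begin

lemma conjugate_mem_stabilizer:
  assumes "g \<in> carrier G" "\<beta> \<in> E" "y \<in> stabilizer G \<phi> \<beta>"
  shows "g \<otimes>\<^bsub>G\<^esub> y \<otimes>\<^bsub>G\<^esub> inv\<^bsub>G\<^esub> g \<in> stabilizer G \<phi> (\<phi> g \<beta>)"
proof -
  interpret group G using group_hom group_hom.axioms(1) by auto
  have y: "y \<in> carrier G" "\<phi> y \<beta> = \<beta>"
    using assms(3) unfolding stabilizer_def by auto
  have "\<phi> (g \<otimes> y \<otimes> inv g) (\<phi> g \<beta>) = \<phi> (g \<otimes> y) (\<phi> (inv g) (\<phi> g \<beta>))"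
    using composition_rule[OF element_image[OF assms(1,2)]] assms(1) y(1) by simp
  also have "\<dots> = \<phi> g \<beta>"
    using orbit_sym_aux[OF assms(1,2)] composition_rule[OF assms(2,1) y(1)] y(2) by simp
  finally show ?thesis
    using assms(1) y(1) unfolding stabilizer_def by simp
qed

lemma orbit_subset: "x \<in> E \<Longrightarrow> orbit G \<phi> x \<subseteq> E"
  unfolding orbit_def using element_image by blast

lemma orbit_closed:
  assumes "x \<in> E" "y \<in> orbit G \<phi> x" "g \<in> carrier G"
  shows "\<phi> g y \<in> orbit G \<phi> x"
proof -
  interpret group G using group_hom group_hom.axioms(1) by auto
  obtain h where h: "h \<in> carrier G" "y = \<phi> h x"
    using assms(2) unfolding orbit_def by blast
  then have "\<phi> g y = \<phi> (g \<otimes> h) x"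
    using composition_rule[OF assms(1,3) h(1)] by simp
  then show ?thesis
    using assms(3) h(1) unfolding orbit_def by blast
qed

lemma orbit_transitive:
  assumes "x \<in> E" "y \<in> orbit G \<phi> x" "z \<in> orbit G \<phi> x"
  shows "\<exists>g\<in>carrier G. \<phi> g y = z"
proof -
  interpret group G using group_hom group_hom.axioms(1) by auto
  obtain h k where hk: "h \<in> carrier G" "y = \<phi> h x" "k \<in> carrier G" "z = \<phi> k x"
    using assms(2,3) unfolding orbit_def by blast
  then have "\<phi> (k \<otimes> inv h) y = z"
    using composition_rule[OF element_image[OF hk(1) assms(1)]] orbit_sym_aux[OF hk(1) assms(1)] by simp
  then show ?thesis
    using hk by blast
qed

end

locale orbit_incidence = \<Omega>: transitive_action G E \<phi> + W: group_action G W \<psi>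
  for G (structure) and E :: "'b set" and \<phi> and W :: "'c set" and \<psi> +
  fixes w :: 'c and R :: "'c \<Rightarrow> 'b \<Rightarrow> bool"
  assumes w_in_W: "w \<in> W"
    and finite_E: "finite E" and finite_orbit: "finite (orbit G \<psi> w)"
    and R_equivariant:
      "\<lbrakk>g \<in> carrier G; T \<in> orbit G \<psi> w; \<beta> \<in> E; R T \<beta>\<rbrakk> \<Longrightarrow> R (\<psi> g T) (\<phi> g \<beta>)"
begin

abbreviation V where "V \<equiv> orbit G \<psi> w"

lemma card_block_le:
  assumes "\<beta> \<in> E" "\<delta> \<in> E"
  shows "card {T \<in> V. R T \<beta>} \<le> card {T \<in> V. R T \<delta>}"
proof -
  obtain g where g: "g \<in> carrier G" "\<phi> g \<beta> = \<delta>"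
    using \<Omega>.unique_orbit[OF assms] by blast
  have "inj_on (\<psi> g) {T \<in> V. R T \<beta>}"
    by (rule inj_on_subset[OF W.inj_prop[OF g(1)]]) (use W.orbit_subset[OF w_in_W] in auto)
  moreover have "\<psi> g ` {T \<in> V. R T \<beta>} \<subseteq> {T \<in> V. R T \<delta>}"
    using W.orbit_closed[OF w_in_W _ g(1)] R_equivariant[OF g(1) _ assms(1)] g(2) by auto
  ultimately show ?thesis
    using finite_orbit by (intro card_inj_on_le) auto
qed

lemma card_degree_le:
  assumes "T \<in> V" "T' \<in> V"
  shows "card {\<beta> \<in> E. R T \<beta>} \<le> card {\<beta> \<in> E. R T' \<beta>}"
proof -
  obtain g where g: "g \<in> carrier G" "\<psi> g T = T'"
    using W.orbit_transitive[OF w_in_W assms] by blast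
  have "inj_on (\<phi> g) {\<beta> \<in> E. R T \<beta>}"
    using \<Omega>.inj_prop[OF g(1)] by (rule inj_on_subset) auto
  moreover have "\<phi> g ` {\<beta> \<in> E. R T \<beta>} \<subseteq> {\<beta> \<in> E. R T' \<beta>}"
    using \<Omega>.element_image[OF g(1)] R_equivariant[OF g(1) assms(1)] g(2) by auto
  ultimately show ?thesis
    using finite_E by (intro card_inj_on_le) auto
qed

lemma blocks_intersect_of_base:
  assumes "\<alpha> \<in> E" and intersecting: "\<And>\<gamma>. \<gamma> \<in> E \<Longrightarrow> \<exists>T\<in>V. R T \<alpha> \<and> R T \<gamma>"
    and "\<beta> \<in> E" "\<gamma> \<in> E"
  shows "\<exists>T\<in>V. R T \<beta> \<and> R T \<gamma>"
proof -
  obtain g where g: "g \<in> carrier G" "\<phi> g \<alpha> = \<beta>"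
    using \<Omega>.unique_orbit[OF assms(1,3)] by blast
  interpret group G using \<Omega>.group_hom group_hom.axioms(1) by auto
  define \<gamma>' where "\<gamma>' = \<phi> (inv g) \<gamma>"
  have \<gamma>': "\<gamma>' \<in> E" "\<phi> g \<gamma>' = \<gamma>"
    using \<Omega>.element_image[OF inv_closed[OF g(1)] assms(4)]
      \<Omega>.orbit_sym_aux[OF inv_closed[OF g(1)] assms(4)] g(1)
    by (simp_all add: \<gamma>'_def)
  obtain T where "T \<in> V" "R T \<alpha>" "R T \<gamma>'"
    using intersecting[OF \<gamma>'(1)] by blast
  then show ?thesis
    using W.orbit_closed[OF w_in_W _ g(1)] R_equivariant[OF g(1)] assms(1) \<gamma>' g(2) by metis
qed

theorem card_orbit_le:
  assumes "\<alpha> \<in> E" and intersecting: "\<And>\<gamma>. \<gamma> \<in> E \<Longrightarrow> \<exists>T\<in>V. R T \<alpha> \<and> R T \<gamma>"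
  shows "card V \<le> card {T \<in> V. R T \<alpha>} ^ 2 - card {T \<in> V. R T \<alpha>} + 1"
proof -
  obtain T\<^sub>0 where T\<^sub>0: "T\<^sub>0 \<in> V" "R T\<^sub>0 \<alpha>"
    using intersecting[OF assms(1)] by blast
  interpret intersecting_family V E "\<lambda>\<beta>. {T \<in> V. R T \<beta>}"
      "card {T \<in> V. R T \<alpha>}" "card {\<beta> \<in> E. R T\<^sub>0 \<beta>}"
  proof
    show "card {T \<in> V. R T \<beta>} = card {T \<in> V. R T \<alpha>}" if "\<beta> \<in> E" for \<beta>
      using card_block_le[OF that assms(1)] card_block_le[OF assms(1) that] by (rule antisym)
    show "card {\<beta> \<in> E. T \<in> {T \<in> V. R T \<beta>}} = card {\<beta> \<in> E. R T\<^sub>0 \<beta>}" if "T \<in> V" for T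
      using that antisym[OF card_degree_le[OF that T\<^sub>0(1)] card_degree_le[OF T\<^sub>0(1) that]] by simp
    show "card {\<beta> \<in> E. R T\<^sub>0 \<beta>} > 0"
      using T\<^sub>0 assms(1) finite_E by (auto simp: card_gt_0_iff)
    show "{T \<in> V. R T \<beta>} \<inter> {T \<in> V. R T \<gamma>} \<noteq> {}" if "\<beta> \<in> E" "\<gamma> \<in> E" for \<beta> \<gamma>
      using blocks_intersect_of_base[OF assms that] by blast
  qed (use finite_orbit finite_E in auto)
  show ?thesis by (rule card_points_le)
qed

end

section \<open>Conjugates of Sylow subgroups of a point stabiliser\<close>

context group
begin

lemma orbit_conjugation_on_power_set:
  assumes "A \<subseteq> carrier G"
  shows "orbit G (\<lambda>g. \<lambda>A\<in>{A. A \<subseteq> carrier G}. g <# A #> inv g) A = subgroup_conjugates G A"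
  using assms unfolding orbit_def subgroup_conjugates_def by auto

lemma orbit_conjugation:
  assumes "x \<in> carrier G"
  shows "orbit G (\<lambda>g. \<lambda>y\<in>carrier G. g \<otimes> y \<otimes> inv g) x = elem_conjugates G x"
  using assms unfolding orbit_def elem_conjugates_def by auto

end

locale point_stabilizer_sylow = transitive_action G E \<phi> for G (structure) and E \<phi> +
  fixes \<alpha> and p :: nat and S
  assumes finite_carrier: "finite (carrier G)" and finite_E: "finite E"
    and \<alpha>_in_E: "\<alpha> \<in> E" and prime_p: "Factorial_Ring.prime p"
    and sylow: "is_sylow_subgroup G p (stabilizer G \<phi> \<alpha>) S"
begin

sublocale group G
  using group_hom group_hom.axioms(1) by blast

abbreviation H where "H \<equiv> stabilizer G \<phi> \<alpha>"
abbreviation K where "K \<equiv> G\<lparr>carrier := H\<rparr>"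

lemma H_subgroup: "subgroup H G"
  using stabilizer_subgroup[OF \<alpha>_in_E] .

lemma K_group: "group K"
  using subgroup.subgroup_is_group[OF H_subgroup is_group] .

lemma S_subgroup_K: "subgroup S K" and card_S: "card S = p ^ multiplicity p (Coset.order K)"
  using sylow subgroup_incl[OF _ H_subgroup] unfolding is_sylow_subgroup_def
  by (auto simp: Coset.order_def)

lemma S_subset: "S \<subseteq> H" "S \<subseteq> carrier G"
  using sylow subgroup.subset[OF H_subgroup] unfolding is_sylow_subgroup_def by auto

lemma K_conjugate_eq:
  assumes "h \<in> H"
  shows "h <#\<^bsub>K\<^esub> A #>\<^bsub>K\<^esub> inv\<^bsub>K\<^esub> h = h <# A #> inv h"
  using assms H_subgroup by (simp add: l_coset_def r_coset_def)

lemma conjugate_S_subset_H: "h \<in> H \<Longrightarrow> h <# S #> inv h \<subseteq> H"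
  using S_subset H_subgroup
  by (auto simp: conjugate_eq_image intro!: subgroup.m_closed subgroup.m_inv_closed)

lemma p_subgroup_le_H_conjugate:
  assumes "subgroup Q G" "Q \<subseteq> H" "card Q = p ^ k"
  shows "\<exists>h\<in>H. Q \<subseteq> h <# S #> inv h"
  using group.p_subgroup_le_conjugate_sylow[OF K_group _ prime_p S_subgroup_K card_S
      subgroup_incl[OF assms(1) H_subgroup assms(2)] assms(3)]
    finite_carrier subgroup.subset[OF H_subgroup] K_conjugate_eq
  by (auto intro: finite_subset)

lemma conjugate_S_le_stabilizer:
  assumes "\<gamma> \<in> E" "\<not> p dvd card (orbit K \<phi> \<gamma>)"
  shows "\<exists>h\<in>H. h <# S #> inv h \<subseteq> stabilizer G \<phi> \<gamma>"
proof -
  interpret K_act: group_action K E \<phi>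
    using induced_action[OF H_subgroup] .
  let ?L = "stabilizer K \<phi> \<gamma>" and ?v = "multiplicity p (card H)"
  have "card (orbit K \<phi> \<gamma>) * card ?L = card H"
    using K_act.orbit_stabilizer_theorem[OF assms(1)] by (simp add: Coset.order_def)
  moreover have "coprime (p ^ ?v) (card (orbit K \<phi> \<gamma>))"
    using assms(2) prime_p by (simp add: prime_imp_coprime coprime_power_left_iff)
  ultimately have "p ^ ?v dvd card ?L"
    using multiplicity_dvd[of p "card H"] by (metis coprime_dvd_mult_right_iff)
  then have "p ^ multiplicity p (Coset.order K) dvd card ?L"
    by (simp add: Coset.order_def)
  moreover have "finite (carrier K)"
    using finite_carrier subgroup.subset[OF H_subgroup] finite_subset by auto
  ultimately obtain h where "h \<in> H" "h <#\<^bsub>K\<^esub> S #>\<^bsub>K\<^esub> inv\<^bsub>K\<^esub> h \<subseteq> ?L"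
    using group.sylow_conjugate_le_subgroup[OF K_group _ prime_p S_subgroup_K card_S
        K_act.stabilizer_subgroup[OF assms(1)]]
    by auto
  moreover have "?L \<subseteq> stabilizer G \<phi> \<gamma>"
    using subgroup.subset[OF H_subgroup] unfolding stabilizer_def by auto
  ultimately show ?thesis
    using K_conjugate_eq by auto
qed

lemma subgroup_conjugates_K: "subgroup_conjugates K S = {T \<in> subgroup_conjugates G S. T \<subseteq> H}"
proof (intro equalityI subsetI)
  fix T assume "T \<in> subgroup_conjugates K S"
  then obtain h where h: "h \<in> H" "T = h <#\<^bsub>K\<^esub> S #>\<^bsub>K\<^esub> inv\<^bsub>K\<^esub> h"
    unfolding subgroup_conjugates_def by auto
  then have "T = h <# S #> inv h"
    using K_conjugate_eq by simp
  moreover have "h \<in> carrier G"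
    using h(1) subgroup.subset[OF H_subgroup] by blast
  ultimately show "T \<in> {T \<in> subgroup_conjugates G S. T \<subseteq> H}"
    using conjugate_S_subset_H[OF h(1)] unfolding subgroup_conjugates_def by blast
next
  fix T assume "T \<in> {T \<in> subgroup_conjugates G S. T \<subseteq> H}"
  then obtain g where g: "g \<in> carrier G" "T = g <# S #> inv g" and "T \<subseteq> H"
    unfolding subgroup_conjugates_def by blast
  have T_subgroup: "subgroup T G"
    using subgroup_conjugation_is_surj1[of "inv g" S] g sylow
    unfolding is_sylow_subgroup_def by simp
  have card_T: "card T = card S"
    using card_conjugate[OF g(1) S_subset(2)] g(2) by simp
  also have "\<dots> = p ^ multiplicity p (card H)"
    using sylow unfolding is_sylow_subgroup_def by blast
  finally obtain h where h: "h \<in> H" "T \<subseteq> h <# S #> inv h"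
    using p_subgroup_le_H_conjugate[OF T_subgroup \<open>T \<subseteq> H\<close>] by blast
  have h_carrier: "h \<in> carrier G"
    using h(1) subgroup.subset[OF H_subgroup] by blast
  have "finite (h <# S #> inv h)"
    using finite_carrier conjugate_S_subset_H[OF h(1)] subgroup.subset[OF H_subgroup]
    by (meson finite_subset)
  moreover have "card T = card (h <# S #> inv h)"
    using card_T card_conjugate[OF h_carrier S_subset(2)] by simp
  ultimately have "T = h <# S #> inv h"
    by (rule card_subset_eq[OF _ h(2)])
  then have "T = h <#\<^bsub>K\<^esub> S #>\<^bsub>K\<^esub> inv\<^bsub>K\<^esub> h"
    using K_conjugate_eq[OF h(1)] by simp
  then show "T \<in> subgroup_conjugates K S"
    unfolding subgroup_conjugates_def using h(1) by auto
qed

lemma card_sylow_conjugates_le: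
  assumes no_p_subdegree: "\<And>\<beta>. \<beta> \<in> E \<Longrightarrow> \<not> p dvd card (orbit K \<phi> \<beta>)"
  shows "card (subgroup_conjugates G S)
    \<le> card (subgroup_conjugates K S) ^ 2 - card (subgroup_conjugates K S) + 1"
proof -
  let ?\<psi> = "\<lambda>g. \<lambda>A\<in>{A. A \<subseteq> carrier G}. g <# A #> inv g"
  interpret orbit_incidence G E \<phi> "{A. A \<subseteq> carrier G}" ?\<psi> S "\<lambda>T \<beta>. T \<subseteq> stabilizer G \<phi> \<beta>"
  proof (intro orbit_incidence.intro orbit_incidence_axioms.intro)
    show "transitive_action G E \<phi>" by unfold_locales
    show "group_action G {A. A \<subseteq> carrier G} ?\<psi>"
      by (rule action_by_conjugation_on_power_set)
    show "finite (orbit G ?\<psi> S)"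
      using orbit_conjugation_on_power_set[OF S_subset(2)] finite_carrier
      unfolding subgroup_conjugates_def by (auto intro: finite_subset[of _ "Pow (carrier G)"])
    fix g T \<beta>
    assume "g \<in> carrier G" "T \<in> orbit G ?\<psi> S" "\<beta> \<in> E" "T \<subseteq> stabilizer G \<phi> \<beta>"
    moreover have "T \<subseteq> carrier G"
      using \<open>T \<subseteq> stabilizer G \<phi> \<beta>\<close> stabilizer_subset by blast
    ultimately show "?\<psi> g T \<subseteq> stabilizer G \<phi> (\<phi> g \<beta>)"
      using conjugate_mem_stabilizer by (auto simp: conjugate_eq_image)
  qed (use S_subset finite_E in auto)
  have "card (orbit G ?\<psi> S) \<le> card {T \<in> orbit G ?\<psi> S. T \<subseteq> H} ^ 2 - card {T \<in> orbit G ?\<psi> S. T \<subseteq> H} + 1"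
  proof (rule card_orbit_le[OF \<alpha>_in_E])
    fix \<gamma> assume "\<gamma> \<in> E"
    then obtain h where h: "h \<in> H" "h <# S #> inv h \<subseteq> stabilizer G \<phi> \<gamma>"
      using conjugate_S_le_stabilizer no_p_subdegree by blast
    then have "h <# S #> inv h \<in> orbit G ?\<psi> S"
      using S_subset(2) subgroup.subset[OF H_subgroup] unfolding orbit_def by auto
    then show "\<exists>T\<in>orbit G ?\<psi> S. T \<subseteq> H \<and> T \<subseteq> stabilizer G \<phi> \<gamma>"
      using h conjugate_S_subset_H by blast
  qed
  then show ?thesis
    by (simp only: orbit_conjugation_on_power_set[OF S_subset(2)] subgroup_conjugates_K)
qed

lemma card_p_element_class_le:
  assumes no_p_subdegree: "\<And>\<beta>. \<beta> \<in> E \<Longrightarrow> \<not> p dvd card (orbit K \<phi> \<beta>)"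
    and x: "x \<in> H" "ord x = p ^ k"
  shows "card (elem_conjugates G x)
    \<le> card (elem_conjugates G x \<inter> H) ^ 2 - card (elem_conjugates G x \<inter> H) + 1"
proof -
  let ?\<psi> = "\<lambda>g. \<lambda>y\<in>carrier G. g \<otimes> y \<otimes> inv g"
  have x_carrier: "x \<in> carrier G"
    using x(1) stabilizer_subset by blast
  interpret orbit_incidence G E \<phi> "carrier G" ?\<psi> x "\<lambda>y \<beta>. y \<in> stabilizer G \<phi> \<beta>"
  proof (intro orbit_incidence.intro orbit_incidence_axioms.intro)
    show "transitive_action G E \<phi>" by unfold_locales
    show "group_action G (carrier G) ?\<psi>"
      by (rule action_by_conjugation)
    show "finite (orbit G ?\<psi> x)"
      using finite_carrier group_action.orbit_subset[OF action_by_conjugation x_carrier] finite_subset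
      by blast
    fix g y \<beta>
    assume "g \<in> carrier G" "\<beta> \<in> E" "y \<in> stabilizer G \<phi> \<beta>"
    moreover have "y \<in> carrier G"
      using \<open>y \<in> stabilizer G \<phi> \<beta>\<close> stabilizer_subset by blast
    ultimately show "?\<psi> g y \<in> stabilizer G \<phi> (\<phi> g \<beta>)"
      using conjugate_mem_stabilizer by simp
  qed (use x_carrier finite_E in auto)
  have x_group: "subgroup (generate G {x}) G" "card (generate G {x}) = p ^ k"
    using generate_is_subgroup[of "{x}"] generate_pow_card[OF x_carrier] x_carrier x(2) by auto
  moreover have "generate G {x} \<subseteq> H"
    using generate_subgroup_incl[OF _ H_subgroup] x(1) by simp
  ultimately obtain k\<^sub>0 where k\<^sub>0: "k\<^sub>0 \<in> H" "generate G {x} \<subseteq> k\<^sub>0 <# S #> inv k\<^sub>0"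
    using p_subgroup_le_H_conjugate by blast
  have "x \<in> generate G {x}"
    by (rule generate.incl) simp
  then obtain s where s: "s \<in> S" "x = k\<^sub>0 \<otimes> s \<otimes> inv k\<^sub>0"
    using k\<^sub>0(2) unfolding conjugate_eq_image by blast
  have k\<^sub>0_carrier: "k\<^sub>0 \<in> carrier G"
    using k\<^sub>0(1) stabilizer_subset by blast
  have s_carrier: "s \<in> carrier G"
    using s(1) S_subset(2) by blast
  have "s = ?\<psi> (inv k\<^sub>0) x"
    using s(2) k\<^sub>0_carrier s_carrier by (simp add: m_assoc, simp add: m_assoc[symmetric])
  then have s_orbit: "s \<in> orbit G ?\<psi> x"
    using W.orbit_closed[OF x_carrier W.orbit_refl[OF x_carrier] inv_closed[OF k\<^sub>0_carrier]]
    by (simp only:)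
  have "card (orbit G ?\<psi> x) \<le> card {y \<in> orbit G ?\<psi> x. y \<in> H} ^ 2 - card {y \<in> orbit G ?\<psi> x. y \<in> H} + 1"
  proof (rule card_orbit_le[OF \<alpha>_in_E])
    fix \<gamma> assume "\<gamma> \<in> E"
    then obtain h where h: "h \<in> H" "h <# S #> inv h \<subseteq> stabilizer G \<phi> \<gamma>"
      using conjugate_S_le_stabilizer no_p_subdegree by blast
    have "h \<otimes> s \<otimes> inv h \<in> h <# S #> inv h"
      using s(1) unfolding conjugate_eq_image by blast
    moreover have "h \<in> carrier G"
      using h(1) stabilizer_subset by blast
    then have "h \<otimes> s \<otimes> inv h \<in> orbit G ?\<psi> x"
      using W.orbit_closed[OF x_carrier s_orbit] s_carrier by simp
    ultimately show "\<exists>y\<in>orbit G ?\<psi> x. y \<in> H \<and> y \<in> stabilizer G \<phi> \<gamma>"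
      using h conjugate_S_subset_H by blast
  qed
  moreover have "{y \<in> elem_conjugates G x. y \<in> H} = elem_conjugates G x \<inter> H"
    by blast
  ultimately show ?thesis
    by (simp only: orbit_conjugation[OF x_carrier])
qed

end

theorem lemma2p6:
  fixes G (structure) and \<Omega> :: "'b set" and \<phi> :: "'a \<Rightarrow> 'b \<Rightarrow> 'b"
    and \<alpha> :: 'b and p :: nat and S :: "'a set" and x :: 'a
  assumes "faithful_action G \<Omega> \<phi>"
    and "transitive_action G \<Omega> \<phi>"
    and "finite (carrier G)" and "finite \<Omega>"
    and "\<alpha> \<in> \<Omega>"
    and "Factorial_Ring.prime p"
    and "is_sylow_subgroup G p (stabilizer G \<phi> \<alpha>) S"
    and "x \<in> stabilizer G \<phi> \<alpha>"
    and "\<exists>k. group.ord G x = p ^ k"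
  shows "(card (subgroup_conjugates G S) >
            card (subgroup_conjugates (G\<lparr>carrier := stabilizer G \<phi> \<alpha>\<rparr>) S) ^ 2
            - card (subgroup_conjugates (G\<lparr>carrier := stabilizer G \<phi> \<alpha>\<rparr>) S) + 1
          \<longrightarrow> (\<exists>\<beta>\<in>\<Omega>. p dvd card (orbit (G\<lparr>carrier := stabilizer G \<phi> \<alpha>\<rparr>) \<phi> \<beta>)))
       \<and> (card (elem_conjugates G x) >
            card (elem_conjugates G x \<inter> stabilizer G \<phi> \<alpha>) ^ 2
            - card (elem_conjugates G x \<inter> stabilizer G \<phi> \<alpha>) + 1
          \<longrightarrow> (\<exists>\<beta>\<in>\<Omega>. p dvd card (orbit (G\<lparr>carrier := stabilizer G \<phi> \<alpha>\<rparr>) \<phi> \<beta>)))"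
proof -
  interpret point_stabilizer_sylow G \<Omega> \<phi> \<alpha> p S
    using assms(2-7) by (simp add: point_stabilizer_sylow_def point_stabilizer_sylow_axioms_def)
  obtain k where k: "ord x = p ^ k"
    using assms(9) by blast
  show ?thesis
    using card_sylow_conjugates_le card_p_element_class_le[OF _ assms(8) k] not_le by blast
qed

end
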